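(* Assume $\mathrm{recc}(C)\subseteq\mathrm{recc}(P^B)$. Fix $k\in N_2$ and assume $N_0\not\subseteq J$. Let $S\subseteq M'$. Then every $x\in P^B\setminus S_k^C$ satisfies $$\sum_{i\in S}x_i-\sum_{j\in N\setminus J}\frac{x_j}{\varepsilon'_j(S)}\le0.$$
   Context: Let $A\in\mathbb{R}^{m\times n}$ have full row rank, $b\in\mathbb{R}^m$, and $P=\{x\in\mathbb{R}^n_+:Ax=b\}$. Let $C\subseteq\mathbb{R}^n$ be an open convex set. Fix a basis $B$ of $P$ with nonbasic set $N=\{1,\dots,n\}\setminus B$. Write $P=\{x:x_i=\bar b_i-\sum_{j\in N}\bar a_{ij}x_j\ (i\in B),\ x\ge0\}$ with $\bar b\ge0$. The basic solution $\bar x$ has $\bar x_i=\bar b_i$ ($i\in B$) and $0$ ($i\in N$). $P^B$ is obtained by dropping $x_i\ge0$ for $i\in B$. For $j\in N$, $\bar r^j$ has $\bar r^j_k=-\bar a_{kj}$ ($k\in B$), $\bar r^j_j=1$, and $0$ otherwise. Thus $P^B=\{\bar x+\sum_{j\in N}x_j\bar r^j:x_j\ge0\}$, and for $x\in P^B$ the $x_j$ ($j\in N$) are the coefficients in this representation. It is assumed that $\bar x\notin\mathrm{cl}(C)$. For $j\in N$, $\alpha_j=\inf\{\lambda\ge0:\bar x+\lambda\bar r^j\in C\}$ and $\beta_j=\sup\{\lambda\ge0:\bar x+\lambda\bar r^j\in C\}$, with $\alpha_j=+\infty$, $\beta_j=-\infty$ if the halfline misses $C$. Define - $N_0=\{j:\alpha_j=+\infty,\beta_j=-\infty\}$;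 - $N_1=\{j:\alpha_j\in(0,\infty),\beta_j=+\infty\}$; - $N_2=\{j:\alpha_j\in(0,\infty),\beta_j\in(\alpha_j,\infty)\}$. For a set $K$, $\mathrm{recc}(K)=\{d:x+\lambda d\in K\ \forall x\in K,\lambda\ge0\}$. We use the convention $t/+\infty=0$. For $k\in N_2$, let $S_k^C=\{\bar x\}+\mathrm{conv}\big(\bigcup_{j\in N_2}\{\lambda\bar r^j:0\le\lambda<\beta_j\}\big)+\{\lambda\bar r^k:\lambda\le0\}+\mathrm{recc}(C)$. Let $J=\{i\in N:\bar r^i\in\mathrm{recc}(S_k^C)\}$. For $i\in J$ and $j\in N\setminus J$, let $\gamma'_{ij}=\sup\{\gamma\ge0:\bar r^i+\gamma\bar r^j\in\mathrm{recc}(S_k^C)\}$. Let $M'=\{i\in J:\gamma'_{ij}>0\ \forall j\in N\setminus J\}$. For $S\subseteq M'$ and $j\in N\setminus J$, $\varepsilon'_j(S)=\min_{i\in S}\gamma'_{ij}$ if $S\ne\emptyset$, and $+\infty$ otherwise. *)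

theory Defs
  imports "HOL-Analysis.Analysis" "HOL-Library.Extended_Real"
begin

definition recc :: "('a::real_vector) set \<Rightarrow> 'a set" where
  "recc K = {d. \<forall>x\<in>K. \<forall>l::real. l \<ge> 0 \<longrightarrow> x + l *\<^sub>R d \<in> K}"

definition xbar :: "'n::finite set \<Rightarrow> ('n \<Rightarrow> real) \<Rightarrow> real^'n" where
  "xbar B bbar = (\<chi> i. if i \<in> B then bbar i else 0)"

definition rbar :: "'n::finite set \<Rightarrow> ('n \<Rightarrow> 'n \<Rightarrow> real) \<Rightarrow> 'n \<Rightarrow> real^'n" where
  "rbar B abar j = (\<chi> k. if k \<in> B then - abar k j else if k = j then 1 else 0)"

text \<open>P^B: drop the nonnegativity constraints on the basic variables.\<close>
definition PB :: "real^'n^'m \<Rightarrow> real^'m \<Rightarrow> 'n set \<Rightarrow> (real^'n) set" where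
  "PB A b B = {x. A *v x = b \<and> (\<forall>j. j \<notin> B \<longrightarrow> 0 \<le> x $ j)}"

text \<open>alpha_j and beta_j (inf / sup over the empty set give +inf / -inf).\<close>
definition alpha :: "(real^'n::finite) set \<Rightarrow> real^'n \<Rightarrow> real^'n \<Rightarrow> ereal" where
  "alpha C x0 r = Inf (ereal ` {l. l \<ge> 0 \<and> x0 + l *\<^sub>R r \<in> C})"

definition beta :: "(real^'n::finite) set \<Rightarrow> real^'n \<Rightarrow> real^'n \<Rightarrow> ereal" where
  "beta C x0 r = Sup (ereal ` {l. l \<ge> 0 \<and> x0 + l *\<^sub>R r \<in> C})"

definition N0 :: "'n::finite set \<Rightarrow> ('n \<Rightarrow> 'n \<Rightarrow> real) \<Rightarrow> ('n \<Rightarrow> real) \<Rightarrow> (real^'n) set \<Rightarrow> 'n set" where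
  "N0 B abar bbar C = {j. j \<notin> B \<and>
      alpha C (xbar B bbar) (rbar B abar j) = \<infinity> \<and> beta C (xbar B bbar) (rbar B abar j) = - \<infinity>}"

definition N2 :: "'n::finite set \<Rightarrow> ('n \<Rightarrow> 'n \<Rightarrow> real) \<Rightarrow> ('n \<Rightarrow> real) \<Rightarrow> (real^'n) set \<Rightarrow> 'n set" where
  "N2 B abar bbar C = {j. j \<notin> B \<and>
      0 < alpha C (xbar B bbar) (rbar B abar j) \<and> alpha C (xbar B bbar) (rbar B abar j) < \<infinity> \<and>
      alpha C (xbar B bbar) (rbar B abar j) < beta C (xbar B bbar) (rbar B abar j) \<and>
      beta C (xbar B bbar) (rbar B abar j) < \<infinity>}"

definition SkC :: "'n::finite set \<Rightarrow> ('n \<Rightarrow> 'n \<Rightarrow> real) \<Rightarrow> ('n \<Rightarrow> real) \<Rightarrow> (real^'n) set \<Rightarrow> 'n \<Rightarrow> (real^'n) set" where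
  "SkC B abar bbar C k =
     {xbar B bbar + u + l *\<^sub>R rbar B abar k + w | u l w.
        u \<in> convex hull (\<Union>j\<in>N2 B abar bbar C.
               {m *\<^sub>R rbar B abar j | m. 0 \<le> m \<and> ereal m < beta C (xbar B bbar) (rbar B abar j)})
      \<and> l \<le> 0 \<and> w \<in> recc C}"

definition Jset :: "'n::finite set \<Rightarrow> ('n \<Rightarrow> 'n \<Rightarrow> real) \<Rightarrow> ('n \<Rightarrow> real) \<Rightarrow> (real^'n) set \<Rightarrow> 'n \<Rightarrow> 'n set" where
  "Jset B abar bbar C k = {i. i \<notin> B \<and> rbar B abar i \<in> recc (SkC B abar bbar C k)}"

definition gamma' :: "'n::finite set \<Rightarrow> ('n \<Rightarrow> 'n \<Rightarrow> real) \<Rightarrow> ('n \<Rightarrow> real) \<Rightarrow> (real^'n) set \<Rightarrow> 'n \<Rightarrow> 'n \<Rightarrow> 'n \<Rightarrow> ereal" where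
  "gamma' B abar bbar C k i j =
     Sup (ereal ` {g. g \<ge> 0 \<and> rbar B abar i + g *\<^sub>R rbar B abar j \<in> recc (SkC B abar bbar C k)})"

definition M' :: "'n::finite set \<Rightarrow> ('n \<Rightarrow> 'n \<Rightarrow> real) \<Rightarrow> ('n \<Rightarrow> real) \<Rightarrow> (real^'n) set \<Rightarrow> 'n \<Rightarrow> 'n set" where
  "M' B abar bbar C k = {i \<in> Jset B abar bbar C k.
     \<forall>j. j \<notin> B \<and> j \<notin> Jset B abar bbar C k \<longrightarrow> gamma' B abar bbar C k i j > 0}"

definition eps' :: "'n::finite set \<Rightarrow> ('n \<Rightarrow> 'n \<Rightarrow> real) \<Rightarrow> ('n \<Rightarrow> real) \<Rightarrow> (real^'n) set \<Rightarrow> 'n \<Rightarrow> 'n set \<Rightarrow> 'n \<Rightarrow> ereal" where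
  "eps' B abar bbar C k S j = (if S = {} then \<infinity> else Min ((\<lambda>i. gamma' B abar bbar C k i j) ` S))"

definition divinf :: "real \<Rightarrow> ereal \<Rightarrow> real" where
  "divinf t e = (if e = \<infinity> then 0 else t / real_of_ereal e)"

end

theory Submission
  imports Defs
begin

(* By the basis representation, x = xbar + sum_{l notin B} x_l rbar^l, and xbar lies in S_k^C
   because k is in N_2. So if the inequality failed, it would suffice to see that the ray part
   lies in the convex cone recc(S_k^C), for then x would lie in S_k^C. This cone contains rbar^i
   for i in J and, for i in S and j in N - J, every rbar^i + g rbar^j with 0 <= g < eps'_j(S).
   If sum_{i in S} x_i > sum_j x_j / eps'_j(S), the g_j < eps'_j(S) can be chosen with
   sum_j x_j / g_j still at most sum_{i in S} x_i, and then the rays indexed by S and N - J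
   combine nonnegatively from the rbar^i and the pairs rbar^i + g_j rbar^j. *)

lemma convex_cone_recc: "convex_cone (recc K)"
proof -
  have "d1 + d2 \<in> recc K" if "d1 \<in> recc K" "d2 \<in> recc K" for d1 d2
  proof -
    have "(x + l *\<^sub>R d1) + l *\<^sub>R d2 \<in> K" if "x \<in> K" "0 \<le> l" for x l
      using that \<open>d1 \<in> recc K\<close> \<open>d2 \<in> recc K\<close> by (simp add: recc_def)
    then show ?thesis by (simp add: recc_def scaleR_right_distrib add.assoc)
  qed
  moreover have "c *\<^sub>R d \<in> recc K" if "d \<in> recc K" "0 \<le> c" for c d
    using that by (simp add: recc_def)
  moreover have "0 \<in> recc K"
    by (simp add: recc_def)
  ultimately show ?thesis
    by (simp add: convex_cone_iff)
qed

lemma add_recc_mem: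
  assumes "y \<in> K" "d \<in> recc K"
  shows "y + d \<in> K"
  using assms(2) unfolding recc_def using assms(1) zero_le_one by fastforce

lemma convex_add_scaleR_between:
  assumes "convex R" "a \<in> R" "a + g' *\<^sub>R v \<in> R" "0 \<le> g" "g \<le> g'"
  shows "a + g *\<^sub>R v \<in> R"
proof (cases "g' = 0")
  case True
  then show ?thesis using assms by simp
next
  case False
  then have "a + g *\<^sub>R v = (1 - g/g') *\<^sub>R a + (g/g') *\<^sub>R (a + g' *\<^sub>R v)"
    by (simp add: algebra_simps)
  also have "\<dots> \<in> R"
    using assms False by (intro convexD) (auto simp: field_simps)
  finally show ?thesis .
qed

lemma convex_add_scaleR_below_Sup:
  assumes "convex R" "a \<in> R" "0 \<le> g" "ereal g < Sup (ereal ` {g. 0 \<le> g \<and> a + g *\<^sub>R v \<in> R})"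
  shows "a + g *\<^sub>R v \<in> R"
proof -
  obtain g' where "0 \<le> g'" "a + g' *\<^sub>R v \<in> R" "g < g'"
    using assms(4) by (auto simp: less_Sup_iff)
  then show ?thesis
    using convex_add_scaleR_between[OF assms(1,2)] assms(3) by auto
qed

lemma convex_cone_sum:
  assumes "convex_cone R" "finite I" "\<And>i. i \<in> I \<Longrightarrow> 0 \<le> c i" "\<And>i. i \<in> I \<Longrightarrow> v i \<in> R"
  shows "(\<Sum>i\<in>I. c i *\<^sub>R v i) \<in> R"
  using assms(2-4)
  by (induction I rule: finite_induct)
    (auto intro: convex_cone_add convex_cone_scaleR convex_cone_contains_0 assms(1))

lemma convex_cone_paired_combination:
  fixes r :: "'i \<Rightarrow> 'a::real_vector"
  assumes R: "convex_cone R" and fin: "finite S" "finite N"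
    and r: "\<And>i. i \<in> S \<Longrightarrow> r i \<in> R"
    and pairs: "\<And>i j. i \<in> S \<Longrightarrow> j \<in> N \<Longrightarrow> r i + g j *\<^sub>R r j \<in> R"
    and g: "\<And>j. j \<in> N \<Longrightarrow> 0 < g j"
    and y: "\<And>l. l \<in> S \<union> N \<Longrightarrow> 0 \<le> y l"
    and dominated: "(\<Sum>j\<in>N. y j / g j) \<le> (\<Sum>i\<in>S. y i)" and pos: "0 < (\<Sum>i\<in>S. y i)"
  shows "(\<Sum>i\<in>S. y i *\<^sub>R r i) + (\<Sum>j\<in>N. y j *\<^sub>R r j) \<in> R"
proof -
  define X where "X = (\<Sum>i\<in>S. y i)"
  define T where "T = (\<Sum>j\<in>N. y j / g j)"
  define W where "W = (\<Sum>j\<in>N. y j *\<^sub>R r j)"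
  \<comment> \<open>The weight \<open>y j / g j\<close> of each pair is spread over \<open>S\<close> in proportion to \<open>y i / X\<close>;
    what is left of \<open>r i\<close> has weight \<open>X - T \<ge> 0\<close>.\<close>
  define V where "V i = (X - T) *\<^sub>R r i + (\<Sum>j\<in>N. (y j / g j) *\<^sub>R (r i + g j *\<^sub>R r j))" for i
  have "V i \<in> R" if "i \<in> S" for i
  proof -
    have "0 \<le> y j / g j" if "j \<in> N" for j
      using that g y by (simp add: less_imp_le)
    then have "(\<Sum>j\<in>N. (y j / g j) *\<^sub>R (r i + g j *\<^sub>R r j)) \<in> R"
      using R fin(2) pairs[OF that] by (intro convex_cone_sum)
    moreover have "(X - T) *\<^sub>R r i \<in> R"
      using R dominated r[OF that] by (intro convex_cone_scaleR) (auto simp: X_def T_def)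
    ultimately show ?thesis
      unfolding V_def using R by (intro convex_cone_add)
  qed
  then have "(\<Sum>i\<in>S. (y i / X) *\<^sub>R V i) \<in> R"
    using R fin y pos by (intro convex_cone_sum) (auto simp: X_def)
  moreover have "V i = X *\<^sub>R r i + W" for i
  proof -
    have "(\<Sum>j\<in>N. (y j / g j) *\<^sub>R (r i + g j *\<^sub>R r j)) = (\<Sum>j\<in>N. (y j / g j) *\<^sub>R r i + y j *\<^sub>R r j)"
    proof (intro sum.cong refl)
      fix j
      assume "j \<in> N"
      then have "g j \<noteq> 0"
        using g by fastforce
      then show "(y j / g j) *\<^sub>R (r i + g j *\<^sub>R r j) = (y j / g j) *\<^sub>R r i + y j *\<^sub>R r j"
        by (simp add: scaleR_right_distrib)
    qed
    then show ?thesis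
      by (simp add: V_def T_def W_def sum.distrib scaleR_sum_left algebra_simps)
  qed
  moreover have "(\<Sum>i\<in>S. (y i / X) *\<^sub>R (X *\<^sub>R r i + W)) = (\<Sum>i\<in>S. y i *\<^sub>R r i) + W"
    using pos by (simp add: X_def scaleR_right_distrib sum.distrib scaleR_sum_left[symmetric]
        sum_divide_distrib[symmetric])
  ultimately show ?thesis
    by (simp add: W_def)
qed

lemma exists_below_divinf:
  assumes "0 \<le> t" "0 < e" "0 < \<eta>"
  shows "\<exists>g>0. ereal g < e \<and> t / g < divinf t e + \<eta>"
proof (cases e)
  case (real E)
  with assms have "E > 0" by simp
  have "((\<lambda>g. t / g) \<longlongrightarrow> t / E) (at_left E)"
    using \<open>E > 0\<close> by (intro tendsto_intros) auto
  then have "eventually (\<lambda>g. t / g < t / E + \<eta>) (at_left E)"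
    using assms(3) by (intro order_tendstoD) auto
  moreover have "eventually (\<lambda>g. g \<in> {0<..<E}) (at_left E)"
    using \<open>E > 0\<close> by (rule eventually_at_left_real)
  ultimately obtain g where "t / g < t / E + \<eta>" "g \<in> {0<..<E}"
    using eventually_happens'[OF trivial_limit_at_left_real eventually_conj] by blast
  then show ?thesis
    using real by (intro exI[of _ g]) (auto simp: divinf_def)
next
  case PInf
  have "((\<lambda>g. t / g) \<longlongrightarrow> 0) at_top"
    by (intro tendsto_divide_0[OF tendsto_const] filterlim_at_top_imp_at_infinity filterlim_ident)
  then have "eventually (\<lambda>g. t / g < \<eta>) at_top"
    using assms(3) by (intro order_tendstoD) auto
  then obtain g where "t / g < \<eta>" "0 < g"
    using eventually_happens'[OF trivial_limit_at_top_linorder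
        eventually_conj[OF _ eventually_gt_at_top]] by blast
  then show ?thesis
    using PInf by (intro exI[of _ g]) (auto simp: divinf_def)
next
  case MInf
  with assms show ?thesis by simp
qed

lemma exists_scalings_below_divinf:
  assumes "finite N" "\<And>j. j \<in> N \<Longrightarrow> 0 \<le> t j" "\<And>j. j \<in> N \<Longrightarrow> 0 < e j"
    and "(\<Sum>j\<in>N. divinf (t j) (e j)) < X"
  shows "\<exists>g. (\<forall>j\<in>N. 0 < g j \<and> ereal (g j) < e j) \<and> (\<Sum>j\<in>N. t j / g j) < X"
proof -
  define D where "D = (\<Sum>j\<in>N. divinf (t j) (e j))"
  define \<eta> where "\<eta> = (X - D) / (card N + 1)"
  have "\<eta> > 0"
    using assms(4) by (simp add: \<eta>_def D_def)
  then have "\<forall>j\<in>N. \<exists>g>0. ereal g < e j \<and> t j / g < divinf (t j) (e j) + \<eta>"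
    using assms(2,3) exists_below_divinf by blast
  then obtain g where g: "\<forall>j\<in>N. 0 < g j \<and> ereal (g j) < e j \<and> t j / g j < divinf (t j) (e j) + \<eta>"
    by metis
  have "(\<Sum>j\<in>N. t j / g j) \<le> (\<Sum>j\<in>N. divinf (t j) (e j) + \<eta>)"
    using g by (intro sum_mono) auto
  also have "\<dots> = D + card N * \<eta>"
    by (simp add: D_def sum.distrib)
  also have "\<dots> < D + (card N + 1) * \<eta>"
    using \<open>\<eta> > 0\<close> by simp
  also have "\<dots> = X"
    by (simp add: \<eta>_def)
  finally show ?thesis
    using g by blast
qed

lemma matrix_vector_mult_rbar:
  fixes A :: "real^'n^'m"
  assumes "j \<notin> B" "column j A = (\<Sum>i\<in>B. abar i j *\<^sub>R column i A)"
  shows "A *v rbar B abar j = 0"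
proof -
  have "A *v rbar B abar j = (\<Sum>i\<in>B. (- abar i j) *\<^sub>R column i A) + column j A"
    using assms(1)
    by (simp add: matrix_mult_sum rbar_def scalar_mult_eq_scaleR if_distrib[of "\<lambda>c. c *\<^sub>R _"]
        sum.If_cases Int_absorb1)
  then show ?thesis
    using assms(2) by (simp add: sum_negf)
qed

lemma matrix_vector_mult_xbar:
  fixes A :: "real^'n^'m"
  shows "A *v xbar B bbar = (\<Sum>i\<in>B. bbar i *\<^sub>R column i A)"
  by (simp add: matrix_mult_sum xbar_def scalar_mult_eq_scaleR if_distrib[of "\<lambda>c. c *\<^sub>R _"]
      sum.If_cases)

lemma eq_0_if_supported_on_basis:
  fixes A :: "real^'n^'m" and z :: "real^'n"
  assumes inj: "inj_on (\<lambda>i. column i A) B"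
    and indep: "independent ((\<lambda>i. column i A) ` B)"
    and "A *v z = 0" "\<And>l. l \<notin> B \<Longrightarrow> z $ l = 0"
  shows "z = 0"
proof -
  let ?c = "\<lambda>i. column i A"
  have "(\<Sum>v\<in>?c ` B. z $ inv_into B ?c v *\<^sub>R v) = (\<Sum>i\<in>B. z $ i *\<^sub>R ?c i)"
    using inj by (simp add: sum.reindex) (simp add: inv_into_f_f[OF inj] cong: sum.cong)
  also have "\<dots> = A *v z"
    using assms(4) by (simp add: matrix_mult_sum scalar_mult_eq_scaleR sum.mono_neutral_left)
  finally have "(\<Sum>v\<in>?c ` B. z $ inv_into B ?c v *\<^sub>R v) = 0"
    using assms(3) by simp
  then have "z $ inv_into B ?c v = 0" if "v \<in> ?c ` B" for v
    using indep that unfolding independent_explicit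
    by (elim conjE allE[of _ "\<lambda>v. z $ inv_into B ?c v"]) blast
  then have "z $ i = 0" if "i \<in> B" for i
    using that inv_into_f_f[OF inj that] by (metis imageI)
  then show ?thesis
    using assms(4) by (metis vec_eq_iff zero_index)
qed

lemma eq_xbar_plus_sum_rbar:
  fixes A :: "real^'n^'m" and x :: "real^'n"
  assumes inj: "inj_on (\<lambda>i. column i A) B"
    and indep: "independent ((\<lambda>i. column i A) ` B)"
    and abar: "\<And>j. j \<notin> B \<Longrightarrow> column j A = (\<Sum>i\<in>B. abar i j *\<^sub>R column i A)"
    and bbar: "b = (\<Sum>i\<in>B. bbar i *\<^sub>R column i A)"
    and "A *v x = b"
  shows "x = xbar B bbar + (\<Sum>l\<in>-B. x $ l *\<^sub>R rbar B abar l)"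
proof -
  let ?z = "x - (xbar B bbar + (\<Sum>l\<in>-B. x $ l *\<^sub>R rbar B abar l))"
  have "A *v ?z = 0"
    using assms(5) abar bbar
    by (simp add: matrix_vector_mult_diff_distrib matrix_vector_right_distrib
        linear_sum[OF matrix_vector_mul_linear] matrix_vector_mult_scaleR
        matrix_vector_mult_rbar matrix_vector_mult_xbar)
  moreover have "?z $ l = 0" if "l \<notin> B" for l
  proof -
    have "(\<Sum>m\<in>-B. x $ m *\<^sub>R rbar B abar m) $ l = (\<Sum>m\<in>-B. x $ m * (if l = m then 1 else 0))"
      using that by (simp add: sum_component rbar_def)
    also have "\<dots> = (\<Sum>m\<in>-B. if l = m then x $ m else 0)"
      by (rule sum.cong) auto
    also have "\<dots> = x $ l"
      using that by (simp add: sum.delta)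
    finally show ?thesis
      using that by (simp add: xbar_def)
  qed
  ultimately have "?z = 0"
    by (rule eq_0_if_supported_on_basis[OF inj indep])
  then show ?thesis by simp
qed

lemma xbar_in_SkC:
  assumes "k \<in> N2 B abar bbar C"
  shows "xbar B bbar \<in> SkC B abar bbar C k"
proof -
  have "0 < beta C (xbar B bbar) (rbar B abar k)"
    using assms unfolding N2_def by (auto dest: order.strict_trans)
  then have "0 \<in> {m *\<^sub>R rbar B abar k | m. 0 \<le> m \<and> ereal m < beta C (xbar B bbar) (rbar B abar k)}"
    by (auto intro!: exI[of _ 0] simp: zero_ereal_def)
  then have "0 \<in> convex hull (\<Union>j\<in>N2 B abar bbar C.
      {m *\<^sub>R rbar B abar j | m. 0 \<le> m \<and> ereal m < beta C (xbar B bbar) (rbar B abar j)})"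
    using assms by (blast intro: hull_inc)
  then have "xbar B bbar + 0 + 0 *\<^sub>R rbar B abar k + 0 \<in> SkC B abar bbar C k"
    unfolding SkC_def using convex_cone_contains_0[OF convex_cone_recc] by blast
  then show ?thesis
    by simp
qed

lemma eps'_le_gamma':
  "i \<in> S \<Longrightarrow> eps' B abar bbar C k S j \<le> gamma' B abar bbar C k i j"
  by (auto simp: eps'_def)

lemma eps'_pos:
  assumes "S \<subseteq> M' B abar bbar C k" "j \<notin> B" "j \<notin> Jset B abar bbar C k"
  shows "0 < eps' B abar bbar C k S j"
  using assms by (auto simp: eps'_def M'_def Min_gr_iff)

lemma rbar_add_scaleR_in_recc_SkC:
  assumes "S \<subseteq> M' B abar bbar C k" "i \<in> S" "0 \<le> g" "ereal g < eps' B abar bbar C k S j"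
  shows "rbar B abar i + g *\<^sub>R rbar B abar j \<in> recc (SkC B abar bbar C k)"
proof (rule convex_add_scaleR_below_Sup)
  show "convex (recc (SkC B abar bbar C k))"
    using convex_cone_recc unfolding convex_cone_def by blast
  show "rbar B abar i \<in> recc (SkC B abar bbar C k)"
    using assms(1,2) by (auto simp: M'_def Jset_def)
  have "ereal g < gamma' B abar bbar C k i j"
    using assms(4) eps'_le_gamma'[OF assms(2)] by (rule less_le_trans)
  then show "ereal g < Sup (ereal ` {g. 0 \<le> g \<and>
      rbar B abar i + g *\<^sub>R rbar B abar j \<in> recc (SkC B abar bbar C k)})"
    by (simp add: gamma'_def)
qed (fact assms(3))

lemma sum_rbar_in_recc_SkC:
  fixes y :: "real^'n"
  assumes S: "S \<subseteq> M' B abar bbar C k"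
    and y: "\<And>l. l \<notin> B \<Longrightarrow> 0 \<le> y $ l"
    and dominated: "(\<Sum>j\<in>{j. j \<notin> B \<and> j \<notin> Jset B abar bbar C k}. divinf (y $ j) (eps' B abar bbar C k S j))
                      < (\<Sum>i\<in>S. y $ i)"
  shows "(\<Sum>l\<in>-B. y $ l *\<^sub>R rbar B abar l) \<in> recc (SkC B abar bbar C k)"
proof -
  define J where "J = Jset B abar bbar C k"
  define N where "N = {j. j \<notin> B \<and> j \<notin> J}"
  define R where "R = recc (SkC B abar bbar C k)"
  have R: "convex_cone R" and J: "J \<subseteq> -B" "\<And>i. i \<in> J \<Longrightarrow> rbar B abar i \<in> R" and "S \<subseteq> J"
    using S convex_cone_recc by (auto simp: R_def J_def Jset_def M'_def)
  have "\<exists>g. (\<forall>j\<in>N. 0 < g j \<and> ereal (g j) < eps' B abar bbar C k S j)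
      \<and> (\<Sum>j\<in>N. y $ j / g j) < (\<Sum>i\<in>S. y $ i)"
    using dominated y eps'_pos[OF S] by (intro exists_scalings_below_divinf) (auto simp: N_def J_def)
  then obtain g where g: "\<And>j. j \<in> N \<Longrightarrow> 0 < g j \<and> ereal (g j) < eps' B abar bbar C k S j"
    and g_dominated: "(\<Sum>j\<in>N. y $ j / g j) < (\<Sum>i\<in>S. y $ i)"
    by blast
  have "rbar B abar i + g j *\<^sub>R rbar B abar j \<in> R" if "i \<in> S" "j \<in> N" for i j
    using g[OF that(2)] that(1) S unfolding R_def by (intro rbar_add_scaleR_in_recc_SkC) auto
  moreover have "0 \<le> (\<Sum>j\<in>N. y $ j / g j)"
    using g y by (intro sum_nonneg) (simp add: N_def less_imp_le)
  ultimately have "(\<Sum>i\<in>S. y $ i *\<^sub>R rbar B abar i) + (\<Sum>j\<in>N. y $ j *\<^sub>R rbar B abar j) \<in> R"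
    using R g y g_dominated \<open>S \<subseteq> J\<close> J
    by (intro convex_cone_paired_combination) (auto simp: N_def)
  moreover have "(\<Sum>l\<in>J - S. y $ l *\<^sub>R rbar B abar l) \<in> R"
    using R J y by (intro convex_cone_sum) auto
  moreover have "(\<Sum>l\<in>-B. y $ l *\<^sub>R rbar B abar l) = (\<Sum>l\<in>J - S. y $ l *\<^sub>R rbar B abar l)
      + ((\<Sum>i\<in>S. y $ i *\<^sub>R rbar B abar i) + (\<Sum>j\<in>N. y $ j *\<^sub>R rbar B abar j))"
  proof -
    have "-B = (J - S) \<union> (S \<union> N)" "(J - S) \<inter> (S \<union> N) = {}" "S \<inter> N = {}"
      using \<open>S \<subseteq> J\<close> J(1) by (auto simp: N_def)
    then show ?thesis
      by (simp add: sum.union_disjoint)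
  qed
  ultimately show ?thesis
    using convex_cone_add[OF R] by (simp add: R_def)
qed

theorem theorem6:
  fixes A :: "real^'n^'m" and b :: "real^'m" and B :: "'n set"
    and abar :: "'n \<Rightarrow> 'n \<Rightarrow> real" and bbar :: "'n \<Rightarrow> real"
    and C :: "(real^'n) set" and k :: 'n and S :: "'n set" and x :: "real^'n"
  assumes full_row_rank: "rank A = CARD('m)"
    and basis_card: "card B = CARD('m)"
    and basis_inj: "inj_on (\<lambda>i. column i A) B"
    and basis_indep: "independent ((\<lambda>i. column i A) ` B)"
    and abar_def: "\<And>j. j \<notin> B \<Longrightarrow> column j A = (\<Sum>i\<in>B. abar i j *\<^sub>R column i A)"
    and bbar_def: "b = (\<Sum>i\<in>B. bbar i *\<^sub>R column i A)"
    and feasible: "\<And>i. i \<in> B \<Longrightarrow> bbar i \<ge> 0"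
    and C_open: "open C" and C_convex: "convex C"
    and xbar_notin: "xbar B bbar \<notin> closure C"
    and recc_sub: "recc C \<subseteq> recc (PB A b B)"
    and k_N2: "k \<in> N2 B abar bbar C"
    and N0_not_J: "\<not> N0 B abar bbar C \<subseteq> Jset B abar bbar C k"
    and S_sub: "S \<subseteq> M' B abar bbar C k"
    and x_in: "x \<in> PB A b B - SkC B abar bbar C k"
  shows "(\<Sum>i\<in>S. x $ i)
           - (\<Sum>j\<in>{j. j \<notin> B \<and> j \<notin> Jset B abar bbar C k}. divinf (x $ j) (eps' B abar bbar C k S j))
         \<le> 0"
proof (rule ccontr)
  assume "\<not> ?thesis"
  moreover have "A *v x = b" "\<And>l. l \<notin> B \<Longrightarrow> 0 \<le> x $ l"
    using x_in by (auto simp: PB_def)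
  ultimately have "(\<Sum>l\<in>-B. x $ l *\<^sub>R rbar B abar l) \<in> recc (SkC B abar bbar C k)"
    using S_sub by (intro sum_rbar_in_recc_SkC) auto
  then have "xbar B bbar + (\<Sum>l\<in>-B. x $ l *\<^sub>R rbar B abar l) \<in> SkC B abar bbar C k"
    using xbar_in_SkC[OF k_N2] by (rule add_recc_mem[rotated])
  then have "x \<in> SkC B abar bbar C k"
    using eq_xbar_plus_sum_rbar[OF basis_inj basis_indep abar_def bbar_def \<open>A *v x = b\<close>] by simp
  then show False
    using x_in by simp
qed

end
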